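(* Let $f:\mathbb{R}^n\to\mathbb{R}$ be a polynomial of degree $d$. Assume that $0$ is an isolated zero of $f$ (in particular $f(0)=0$) and that there is $\epsilon_0>0$ such that $\langle\nabla f(x),x\rangle\neq0$ for all $x\in B(0,\epsilon_0)\setminus\{0\}$. Then $|f(ux)|\leq|f(x)|$ for all $u\in[0,1]$ and all $x\in B(0,\epsilon_0)$. In particular, for every $t\geq0$ the sub-level set $\{x\in B(0,\epsilon_0): |f(x)|\leq t\}$ is star-shaped with respect to $0$.
   Context: $B(0,r)$ denotes the open Euclidean ball of radius $r$ centered at $0$, and $\langle\cdot,\cdot\rangle$ the Euclidean inner product. *)

theory Defs
  imports "HOL-Analysis.Analysis"
begin

definition monom_fun :: "('n::finite \<Rightarrow> nat) \<Rightarrow> real^'n \<Rightarrow> real" where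
  "monom_fun \<alpha> x = (\<Prod>i\<in>UNIV. (x $ i) ^ (\<alpha> i))"

definition mdeg :: "('n::finite \<Rightarrow> nat) \<Rightarrow> nat" where
  "mdeg \<alpha> = (\<Sum>i\<in>UNIV. \<alpha> i)"

definition poly_fun_le :: "nat \<Rightarrow> (real^'n::finite \<Rightarrow> real) \<Rightarrow> bool" where
  "poly_fun_le d f \<longleftrightarrow>
     (\<exists>c :: ('n \<Rightarrow> nat) \<Rightarrow> real.
        finite {\<alpha>. c \<alpha> \<noteq> 0} \<and> (\<forall>\<alpha>. c \<alpha> \<noteq> 0 \<longrightarrow> mdeg \<alpha> \<le> d) \<and>
        f = (\<lambda>x. \<Sum>\<alpha>\<in>{\<alpha>. c \<alpha> \<noteq> 0}. c \<alpha> * monom_fun \<alpha> x))"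

definition is_poly_fun :: "(real^'n::finite \<Rightarrow> real) \<Rightarrow> bool" where
  "is_poly_fun f \<longleftrightarrow> (\<exists>d. poly_fun_le d f)"

definition poly_fun_degree :: "(real^'n::finite \<Rightarrow> real) \<Rightarrow> nat" where
  "poly_fun_degree f = (LEAST d. poly_fun_le d f)"

end

theory Submission
  imports Defs
begin

text \<open>Along a ray t \<mapsto> t x the derivative of g(t) = f(t x) is \<langle>\<nabla>f(t x), x\<rangle>, which by hypothesis
  never vanishes for 0 < t < 1. By Rolle's theorem g is then injective on [0,1], hence strictly
  monotone, so |g(u) - g(0)| \<le> |g(1) - g(0)|; with f(0) = 0 this is |f(u x)| \<le> |f(x)|.
  Star-shapedness of the sublevel sets is a restatement, since the ball is convex.\<close>

text \<open>The gradient is the Riesz representative of the derivative; for a functional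
  \<open>f' :: 'a \<Rightarrow> real\<close> it is \<open>adjoint f' 1\<close>, because \<open>f' h = f' h \<bullet> 1 = h \<bullet> adjoint f' 1\<close>.\<close>

lemma GDERIV_adjoint_frechet_derivative:
  fixes f :: "'a::euclidean_space \<Rightarrow> real"
  assumes "f differentiable (at x)"
  shows "GDERIV f x :> adjoint (frechet_derivative f (at x)) 1"
proof -
  let ?f' = "frechet_derivative f (at x)"
  have f': "(f has_derivative ?f') (at x)"
    using assms by (rule iffD1[OF frechet_derivative_works])
  have "?f' = (\<lambda>h. h \<bullet> adjoint ?f' 1)"
    using adjoint_works[OF has_derivative_linear[OF f']] by (simp add: fun_eq_iff)
  with f' show ?thesis
    unfolding gderiv_def by simp
qed

lemma GDERIV_along_ray:
  assumes "GDERIV f (t *\<^sub>R x) :> D"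
  shows "((\<lambda>s. f (s *\<^sub>R x)) has_real_derivative D \<bullet> x) (at t)"
proof -
  have "((\<lambda>s. s *\<^sub>R x) has_derivative (\<lambda>s. s *\<^sub>R x)) (at t)"
    by (rule bounded_linear_imp_has_derivative[OF bounded_linear_scaleR_left])
  from has_derivative_compose[OF this assms[unfolded gderiv_def]]
  show ?thesis
    by (simp add: has_field_derivative_def inner_commute mult_commute_abs)
qed

lemma inj_on_if_deriv_nonzero:
  fixes g :: "real \<Rightarrow> real"
  assumes cont: "continuous_on {a..b} g"
    and deriv: "\<And>t. a < t \<Longrightarrow> t < b \<Longrightarrow> (g has_real_derivative g' t) (at t)"
    and nonzero: "\<And>t. a < t \<Longrightarrow> t < b \<Longrightarrow> g' t \<noteq> 0"
  shows "inj_on g {a..b}"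
proof (rule inj_onI, rule ccontr)
  fix s t assume st: "s \<in> {a..b}" "t \<in> {a..b}" "g s = g t" "s \<noteq> t"
  define l r where "l = min s t" and "r = max s t"
  have lr: "l < r" "g l = g r" "{l..r} \<subseteq> {a..b}"
    using st by (auto simp: l_def r_def min_def max_def)
  have "continuous_on {l..r} g"
    using cont lr(3) by (rule continuous_on_subset)
  moreover have "g differentiable (at z)" if "l < z" "z < r" for z
    using deriv[of z] that lr(3)
    by (force intro: differentiableI has_field_derivative_imp_has_derivative)
  ultimately obtain z where z: "l < z" "z < r" "DERIV g z :> 0"
    using Rolle[OF lr(1,2)] by blast
  with deriv[of z] lr(3) have "g' z = 0"
    by (force intro: DERIV_unique)
  with nonzero[of z] z lr(3) show False
    by force
qed

lemma continuous_inj_on_abs_diff_le: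
  fixes g :: "real \<Rightarrow> real"
  assumes "continuous_on {a..b} g" "inj_on g {a..b}" "u \<in> {a..b}"
  shows "\<bar>g u - g a\<bar> \<le> \<bar>g b - g a\<bar>"
proof (cases "u = a \<or> u = b")
  case False
  with assms(3) have "a < u" "u < b" by auto
  from continuous_inj_imp_mono[OF this assms(1,2)] show ?thesis by auto
qed auto

lemma radial_abs_diff_le:
  fixes f :: "'a::euclidean_space \<Rightarrow> real"
  assumes diff: "\<And>t. t \<in> {0..1} \<Longrightarrow> f differentiable (at (t *\<^sub>R x))"
    and radial: "\<And>t D. 0 < t \<Longrightarrow> t < 1 \<Longrightarrow> GDERIV f (t *\<^sub>R x) :> D \<Longrightarrow> D \<bullet> (t *\<^sub>R x) \<noteq> 0"
    and u: "u \<in> {0..1}"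
  shows "\<bar>f (u *\<^sub>R x) - f 0\<bar> \<le> \<bar>f x - f 0\<bar>"
proof -
  define D where "D t = adjoint (frechet_derivative f (at (t *\<^sub>R x))) 1" for t
  have D: "GDERIV f (t *\<^sub>R x) :> D t" if "t \<in> {0..1}" for t
    unfolding D_def using diff[OF that] by (rule GDERIV_adjoint_frechet_derivative)
  define g where "g s = f (s *\<^sub>R x)" for s
  have g': "(g has_real_derivative D t \<bullet> x) (at t)" if "t \<in> {0..1}" for t
    unfolding g_def using D[OF that] by (rule GDERIV_along_ray)
  have "continuous_on {0..1} g"
    using g' by (intro DERIV_atLeastAtMost_imp_continuous_on) auto
  moreover have "inj_on g {0..1}"
  proof (rule inj_on_if_deriv_nonzero[OF \<open>continuous_on {0..1} g\<close>])
    fix t :: real assume t: "0 < t" "t < 1"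
    then show "(g has_real_derivative D t \<bullet> x) (at t)" by (intro g') auto
    from t have "D t \<bullet> (t *\<^sub>R x) \<noteq> 0" by (intro radial D) auto
    then show "D t \<bullet> x \<noteq> 0" by simp
  qed
  ultimately have "\<bar>g u - g 0\<bar> \<le> \<bar>g 1 - g 0\<bar>"
    using u by (rule continuous_inj_on_abs_diff_le)
  then show ?thesis by (simp add: g_def)
qed

lemma has_derivative_vec_nth: "((\<lambda>x. x $ i) has_derivative (\<lambda>h. h $ i)) F"
  by (rule bounded_linear_imp_has_derivative) (rule bounded_linear_vec_nth)

lemma differentiable_monom_fun: "monom_fun \<alpha> differentiable (at x)"
  unfolding monom_fun_def differentiable_def
  by (auto intro!: derivative_eq_intros has_derivative_vec_nth)

lemma differentiable_poly_fun:
  assumes "is_poly_fun f" shows "f differentiable (at x)"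
  using assms unfolding is_poly_fun_def poly_fun_le_def
  by (auto intro!: derivative_intros differentiable_monom_fun)

lemma closed_segment_0_subset_ball:
  fixes x :: "'a::real_normed_vector"
  assumes "x \<in> ball 0 r"
  shows "closed_segment 0 x \<subseteq> ball 0 r"
  using assms by (intro closed_segment_subset) (auto intro: le_less_trans[OF norm_ge_zero])

theorem lemma3:
  fixes f :: "real^'n \<Rightarrow> real" and d :: nat and \<epsilon>0 :: real
  assumes poly: "is_poly_fun f" and deg: "poly_fun_degree f = d"
    and zero: "f 0 = 0"
    and isolated: "\<exists>r>0. \<forall>x\<in>ball 0 r. x \<noteq> 0 \<longrightarrow> f x \<noteq> 0"
    and eps: "\<epsilon>0 > 0"
    and grad: "\<forall>x\<in>ball 0 \<epsilon>0 - {0}. \<forall>D. (GDERIV f x :> D) \<longrightarrow> inner D x \<noteq> 0"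
  shows "(\<forall>u\<in>{0..1}. \<forall>x\<in>ball 0 \<epsilon>0. \<bar>f (u *\<^sub>R x)\<bar> \<le> \<bar>f x\<bar>) \<and>
         (\<forall>t\<ge>0. \<forall>x\<in>{x\<in>ball 0 \<epsilon>0. \<bar>f x\<bar> \<le> t}.
             closed_segment 0 x \<subseteq> {x\<in>ball 0 \<epsilon>0. \<bar>f x\<bar> \<le> t})"
proof -
  have ray: "\<bar>f (u *\<^sub>R x)\<bar> \<le> \<bar>f x\<bar>" if u: "u \<in> {0..1}" and x: "x \<in> ball 0 \<epsilon>0" for u x
  proof (cases "x = 0")
    case False
    have "t *\<^sub>R x \<in> ball 0 \<epsilon>0 - {0}" if "0 < t" "t < 1" for t
    proof -
      have "t *\<^sub>R x \<in> closed_segment 0 x"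
        using that by (auto simp: in_segment intro!: exI[of _ t])
      with closed_segment_0_subset_ball[OF x] False that show ?thesis
        by auto
    qed
    with grad have "\<And>t D. 0 < t \<Longrightarrow> t < 1 \<Longrightarrow> GDERIV f (t *\<^sub>R x) :> D \<Longrightarrow> D \<bullet> (t *\<^sub>R x) \<noteq> 0"
      by blast
    from radial_abs_diff_le[OF differentiable_poly_fun[OF poly] this u] show ?thesis
      by (simp add: zero)
  qed simp
  have "closed_segment 0 x \<subseteq> {x\<in>ball 0 \<epsilon>0. \<bar>f x\<bar> \<le> t}"
    if "x \<in> ball 0 \<epsilon>0" "\<bar>f x\<bar> \<le> t" for x t
    using that closed_segment_0_subset_ball[OF that(1)] ray by (fastforce simp: in_segment)
  with ray show ?thesis by blast
qed

end
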